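(* Let $m=2$ and let $n\ge 1$ be arbitrary. For every distribution $\mathcal{D}$ supported on $[0,1]$, the majority rule (which selects an alternative ranked first by at least as many voters as the other alternative, ties broken arbitrarily) is both an expected-distortion-maximizing rule and an expected-welfare-maximizing rule for $\mathcal{D}$.
   Context: There are $n$ voters $N=\{1,\dots,n\}$ and $m$ alternatives $A=\{1,\dots,m\}$. A preference profile $\sigma=(\sigma_1,\dots,\sigma_n)$ consists of a ranking (linear order) $\sigma_i$ of $A$ for each voter; position $1$ is the top. A (deterministic) voting rule $f$ maps each preference profile to an alternative $f(\sigma)\in A$. Given a distribution $\mathcal{D}$ and a profile $\sigma$, a random utility profile $u$ consistent with $\sigma$ is generated as follows: independently for each voter $i$, draw $m$ i.i.d. samples from $\mathcal{D}$ and assign them, from highest to lowest, to the alternatives in the order of $\sigma_i$ (the alternative in position $r$ gets the $r$-th largest sample). The social welfare of alternative $j$ is $\mathrm{sw}(j,u)=\sum_{i\in N}u_{ij}$; all expectations are over this random $u$. The distortion of alternative $j$ at $\sigma$ is the random variable $\mathrm{dist}(j,\sigma)=\mathrm{sw}(j,u)/\max_{k\in A}\mathrm{sw}(k,u)$. A rule is an expected-distortion-maximizing rule for $\mathcal{D}$ if for every profile $\sigma$ it selects an alternative maximizing $\mathbb{E}[\mathrm{dist}(j,\sigma)]$ over $j\in A$; it is an expected-welfare-maximizing rule for $\mathcal{D}$ if for every $\sigma$ it selects an alternative maximizing $\mathbb{E}[\mathrm{sw}(j,u)]$ over $j\in A$. *)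

theory Defs
  imports "HOL-Probability.Probability"
begin

text \<open>Voters are 1..n, alternatives are 1..m. A profile is given by
  sigma i j = position (1 = top) of alternative j in voter i's ranking;
  each sigma i restricted to {1..m} must be a bijection onto {1..m}.\<close>

definition is_profile :: "nat \<Rightarrow> nat \<Rightarrow> (nat \<Rightarrow> nat \<Rightarrow> nat) \<Rightarrow> bool" where
  "is_profile n m \<sigma> = (\<forall>i\<in>{1..n}. bij_betw (\<sigma> i) {1..m} {1..m})"

definition kth_largest :: "nat \<Rightarrow> (nat \<Rightarrow> real) \<Rightarrow> nat \<Rightarrow> real" where
  "kth_largest m x r = rev (sort (map x [1..<m+1])) ! (r - 1)"

text \<open>X (i,k) is the k-th sample drawn for voter i; alternative j in position
  sigma i j receives the (sigma i j)-th largest sample.\<close>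
definition utility :: "nat \<Rightarrow> (nat \<Rightarrow> nat \<Rightarrow> nat) \<Rightarrow> (nat \<times> nat \<Rightarrow> real) \<Rightarrow> nat \<Rightarrow> nat \<Rightarrow> real" where
  "utility m \<sigma> X i j = kth_largest m (\<lambda>k. X (i, k)) (\<sigma> i j)"

definition sw :: "nat \<Rightarrow> nat \<Rightarrow> (nat \<Rightarrow> nat \<Rightarrow> nat) \<Rightarrow> (nat \<times> nat \<Rightarrow> real) \<Rightarrow> nat \<Rightarrow> real" where
  "sw n m \<sigma> X j = (\<Sum>i\<in>{1..n}. utility m \<sigma> X i j)"

definition sample_space :: "real measure \<Rightarrow> nat \<Rightarrow> nat \<Rightarrow> (nat \<times> nat \<Rightarrow> real) measure" where
  "sample_space D n m = PiM ({1..n} \<times> {1..m}) (\<lambda>_. D)"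

definition exp_sw :: "real measure \<Rightarrow> nat \<Rightarrow> nat \<Rightarrow> (nat \<Rightarrow> nat \<Rightarrow> nat) \<Rightarrow> nat \<Rightarrow> real" where
  "exp_sw D n m \<sigma> j = (\<integral>X. sw n m \<sigma> X j \<partial>sample_space D n m)"

definition exp_dist :: "real measure \<Rightarrow> nat \<Rightarrow> nat \<Rightarrow> (nat \<Rightarrow> nat \<Rightarrow> nat) \<Rightarrow> nat \<Rightarrow> real" where
  "exp_dist D n m \<sigma> j =
     (\<integral>X. sw n m \<sigma> X j / (MAX k\<in>{1..m}. sw n m \<sigma> X k) \<partial>sample_space D n m)"

definition exp_distortion_maximizing ::
  "real measure \<Rightarrow> nat \<Rightarrow> nat \<Rightarrow> ((nat \<Rightarrow> nat \<Rightarrow> nat) \<Rightarrow> nat) \<Rightarrow> bool" where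
  "exp_distortion_maximizing D n m f =
     (\<forall>\<sigma>. is_profile n m \<sigma> \<longrightarrow> f \<sigma> \<in> {1..m} \<and>
        (\<forall>j\<in>{1..m}. exp_dist D n m \<sigma> j \<le> exp_dist D n m \<sigma> (f \<sigma>)))"

definition exp_welfare_maximizing ::
  "real measure \<Rightarrow> nat \<Rightarrow> nat \<Rightarrow> ((nat \<Rightarrow> nat \<Rightarrow> nat) \<Rightarrow> nat) \<Rightarrow> bool" where
  "exp_welfare_maximizing D n m f =
     (\<forall>\<sigma>. is_profile n m \<sigma> \<longrightarrow> f \<sigma> \<in> {1..m} \<and>
        (\<forall>j\<in>{1..m}. exp_sw D n m \<sigma> j \<le> exp_sw D n m \<sigma> (f \<sigma>)))"

definition is_majority_rule :: "nat \<Rightarrow> ((nat \<Rightarrow> nat \<Rightarrow> nat) \<Rightarrow> nat) \<Rightarrow> bool" where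
  "is_majority_rule n f =
     (\<forall>\<sigma>. is_profile n 2 \<sigma> \<longrightarrow> f \<sigma> \<in> {1, 2} \<and>
        (\<forall>j\<in>{1, 2::nat}. card {i\<in>{1..n}. \<sigma> i j = 1} \<le> card {i\<in>{1..n}. \<sigma> i (f \<sigma>) = 1}))"

end

theory Submission
  imports Defs
begin

text \<open>With two alternatives, each voter gives the larger of their two samples to their top
  alternative and the smaller one to the other. For the majority winner w and the other
  alternative j, the sum of the welfares is therefore independent of the profile, while their
  difference is a sum of the gaps |X(i,1) - X(i,2)|, counted positively exactly for the voters
  ranking w first. As w has at least as many supporters, some permutation of the voters sends
  every supporter of j to a supporter of w. Relabelling the samples by it preserves their
  i.i.d. law and the total welfare, and the welfare differences before and after relabelling
  add up to a nonnegative number. Averaging over a sample and its relabelling gives the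
  welfare inequality; since (P - Q) / max P Q is increasing in P - Q when P + Q is fixed,
  the same pairing gives the distortion inequality.\<close>

lemma kth_largest_2_top: "kth_largest 2 x 1 = max (x 1) (x 2)"
  by (simp add: kth_largest_def upt_rec numeral_2_eq_2 max_def min_def)

lemma kth_largest_2_bottom: "kth_largest 2 x 2 = min (x 1) (x 2)"
  by (simp add: kth_largest_def upt_rec numeral_2_eq_2 max_def min_def)

lemma kth_largest_mem:
  assumes "1 \<le> r" "r \<le> m"
  shows "kth_largest m x r \<in> x ` {1..m}"
proof -
  have "kth_largest m x r \<in> set (rev (sort (map x [1..<m+1])))"
    unfolding kth_largest_def using assms by (intro nth_mem) simp
  then show ?thesis by auto
qed

lemma profile_position_mem:
  assumes "is_profile n m \<sigma>" "i \<in> {1..n}" "j \<in> {1..m}"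
  shows "\<sigma> i j \<in> {1..m}"
  using assms bij_betwE unfolding is_profile_def by blast

lemma profile_2_top_iff:
  assumes "is_profile n 2 \<sigma>" "i \<in> {1..n}" "w \<in> {1, 2}" "j \<in> {1, 2}" "w \<noteq> j"
  shows "\<sigma> i j = 1 \<longleftrightarrow> \<sigma> i w \<noteq> 1"
proof -
  have "inj_on (\<sigma> i) {1..2}"
    using assms(1,2) unfolding is_profile_def bij_betw_def by blast
  then have "\<sigma> i w \<noteq> \<sigma> i j"
    using assms(3-5) by (auto simp: inj_on_eq_iff)
  moreover have "\<sigma> i w \<in> {1..2}" "\<sigma> i j \<in> {1..2}"
    using profile_position_mem[OF assms(1,2)] assms(3,4) by auto
  ultimately show ?thesis by auto
qed

lemma sw_2:
  assumes "is_profile n 2 \<sigma>" "j \<in> {1, 2}"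
  shows "sw n 2 \<sigma> X j =
    (\<Sum>i\<in>{1..n}. if \<sigma> i j = 1 then max (X (i, 1)) (X (i, 2)) else min (X (i, 1)) (X (i, 2)))"
  unfolding sw_def utility_def
proof (rule sum.cong)
  fix i assume "i \<in> {1..n}"
  then have "\<sigma> i j \<in> {1..2}"
    using profile_position_mem[OF assms(1)] assms(2) by auto
  then have "\<sigma> i j = 1 \<or> \<sigma> i j = 2" by auto
  then show "kth_largest 2 (\<lambda>k. X (i, k)) (\<sigma> i j) =
      (if \<sigma> i j = 1 then max (X (i, 1)) (X (i, 2)) else min (X (i, 1)) (X (i, 2)))"
    using kth_largest_2_top[unfolded One_nat_def] kth_largest_2_bottom by auto
qed simp

lemma sw_2_sum_diff:
  assumes "is_profile n 2 \<sigma>" "w \<in> {1, 2}" "j \<in> {1, 2}" "w \<noteq> j"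
  shows "sw n 2 \<sigma> X w + sw n 2 \<sigma> X j = (\<Sum>i\<in>{1..n}. X (i, 1) + X (i, 2))"
    and "sw n 2 \<sigma> X w - sw n 2 \<sigma> X j =
      (\<Sum>i\<in>{1..n}. (if \<sigma> i w = 1 then 1 else -1) * \<bar>X (i, 1) - X (i, 2)\<bar>)"
proof -
  have sw_j: "sw n 2 \<sigma> X j =
      (\<Sum>i\<in>{1..n}. if \<sigma> i w = 1 then min (X (i, 1)) (X (i, 2)) else max (X (i, 1)) (X (i, 2)))"
    unfolding sw_2[OF assms(1,3)]
    using profile_2_top_iff[OF assms(1) _ assms(2-4)] by (intro sum.cong) auto
  show "sw n 2 \<sigma> X w + sw n 2 \<sigma> X j = (\<Sum>i\<in>{1..n}. X (i, 1) + X (i, 2))"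
    unfolding sw_2[OF assms(1,2)] sw_j sum.distrib[symmetric]
    by (intro sum.cong) (auto simp: max_def min_def)
  show "sw n 2 \<sigma> X w - sw n 2 \<sigma> X j =
      (\<Sum>i\<in>{1..n}. (if \<sigma> i w = 1 then 1 else -1) * \<bar>X (i, 1) - X (i, 2)\<bar>)"
    unfolding sw_2[OF assms(1,2)] sw_j sum_subtractf[symmetric]
    by (intro sum.cong) (auto simp: max_def min_def)
qed

lemma sw_bounds:
  assumes "is_profile n m \<sigma>" "j \<in> {1..m}"
    and "\<forall>i\<in>{1..n}. \<forall>k\<in>{1..m}. 0 \<le> X (i, k) \<and> X (i, k) \<le> 1"
  shows "0 \<le> sw n m \<sigma> X j" "sw n m \<sigma> X j \<le> n"
proof -
  have u: "0 \<le> utility m \<sigma> X i j \<and> utility m \<sigma> X i j \<le> 1" if i: "i \<in> {1..n}" for i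
  proof -
    have "\<sigma> i j \<in> {1..m}" using profile_position_mem[OF assms(1) i assms(2)] .
    then have "utility m \<sigma> X i j \<in> (\<lambda>k. X (i, k)) ` {1..m}"
      unfolding utility_def by (intro kth_largest_mem) auto
    then obtain k where "k \<in> {1..m}" "utility m \<sigma> X i j = X (i, k)" by blast
    then show ?thesis using assms(3) i by simp
  qed
  show "0 \<le> sw n m \<sigma> X j" unfolding sw_def using u by (intro sum_nonneg) blast
  have "sw n m \<sigma> X j \<le> (\<Sum>i\<in>{1..n}. 1)" unfolding sw_def using u by (intro sum_mono) blast
  then show "sw n m \<sigma> X j \<le> n" by simp
qed

lemma sum_signed_add_permuted_nonneg:
  fixes s d :: "'a \<Rightarrow> real"
  assumes \<rho>: "bij_betw \<rho> N N"
    and s: "\<And>i. i \<in> N \<Longrightarrow> 0 \<le> s i + s (\<rho> i)" and d: "\<And>i. i \<in> N \<Longrightarrow> 0 \<le> d i"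
  shows "0 \<le> (\<Sum>i\<in>N. s i * d i) + (\<Sum>i\<in>N. s i * d (\<rho> i))"
proof -
  have "(\<Sum>i\<in>N. s i * d i) = (\<Sum>i\<in>N. s (\<rho> i) * d (\<rho> i))"
    by (rule sum.reindex_bij_betw[OF \<rho>, symmetric])
  then have "(\<Sum>i\<in>N. s i * d i) + (\<Sum>i\<in>N. s i * d (\<rho> i)) = (\<Sum>i\<in>N. (s i + s (\<rho> i)) * d (\<rho> i))"
    by (simp add: sum.distrib distrib_right)
  also have "\<dots> \<ge> 0"
  proof (rule sum_nonneg)
    fix i assume "i \<in> N"
    then show "0 \<le> (s i + s (\<rho> i)) * d (\<rho> i)"
      using s d bij_betwE[OF \<rho>] by (simp add: mult_nonneg_nonneg)
  qed
  finally show ?thesis .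
qed

lemma ex_bij_betw_into:
  assumes "finite N" "A \<subseteq> N" "card (N - A) \<le> card A"
  obtains \<rho> where "bij_betw \<rho> N N" "\<rho> ` (N - A) \<subseteq> A"
proof -
  let ?B = "N - A"
  have fin: "finite A" "finite ?B" using assms(1,2) finite_subset by auto
  obtain h where h: "h ` ?B \<subseteq> A" "inj_on h ?B"
    using card_le_inj[OF fin(2,1) assms(3)] by blast
  have "\<exists>g. bij_betw g (N - ?B) (N - h ` ?B)"
  proof (rule finite_same_card_bij)
    have "card (N - h ` ?B) = card N - card ?B"
      using h assms(1,2) card_image[OF h(2)] by (subst card_Diff_subset) (auto intro: finite_subset)
    moreover have "card (N - ?B) = card N - card ?B"
      using fin(2) by (subst card_Diff_subset) auto
    ultimately show "card (N - ?B) = card (N - h ` ?B)" by simp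
  qed (use assms(1) in auto)
  then obtain g where g: "bij_betw g (N - ?B) (N - h ` ?B)" ..
  have "bij_betw (\<lambda>i. if i \<in> ?B then h i else g i) (?B \<union> (N - ?B)) (h ` ?B \<union> (N - h ` ?B))"
    using inj_on_imp_bij_betw[OF h(2)] g by (rule bij_betw_disjoint_Un) blast+
  moreover have "?B \<union> (N - ?B) = N" "h ` ?B \<union> (N - h ` ?B) = N"
    using h(1) assms(2) by auto
  ultimately have "bij_betw (\<lambda>i. if i \<in> ?B then h i else g i) N N" by simp
  moreover have "(\<lambda>i. if i \<in> ?B then h i else g i) ` ?B \<subseteq> A" using h(1) by auto
  ultimately show ?thesis by (rule that)
qed

lemma diff_divide_max_mono:
  fixes P Q P' Q' :: real
  assumes "0 \<le> P" "0 \<le> Q'" "P + Q = P' + Q'" "P - Q \<le> P' - Q'"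
  shows "(P - Q) / max P Q \<le> (P' - Q') / max P' Q'"
proof -
  have "P \<le> P'" "Q' \<le> Q" using assms(3,4) by linarith+
  consider "Q \<le> P" | "P' \<le> Q'" | "P < Q" "Q' < P'" by linarith
  then show ?thesis
  proof cases
    case 1
    have "(P - Q) / P \<le> (P' - Q') / P'"
    proof (cases "P = 0")
      case False
      then have "Q' / P' \<le> Q / P"
        using 1 \<open>P \<le> P'\<close> \<open>Q' \<le> Q\<close> assms(1,2) by (intro frac_le) auto
      then show ?thesis
        using False assms(1) \<open>P \<le> P'\<close> by (simp add: diff_divide_distrib)
    qed (use 1 \<open>P \<le> P'\<close> \<open>Q' \<le> Q\<close> in auto)
    moreover have "max P Q = P" "max P' Q' = P'" using 1 \<open>P \<le> P'\<close> \<open>Q' \<le> Q\<close> by auto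
    ultimately show ?thesis by simp
  next
    case 2
    have "(P - Q) / Q \<le> (P' - Q') / Q'"
    proof (cases "Q' = 0")
      case False
      then have "P / Q \<le> P' / Q'"
        using 2 \<open>P \<le> P'\<close> \<open>Q' \<le> Q\<close> assms(1,2) by (intro frac_le) auto
      then show ?thesis
        using False assms(2) \<open>Q' \<le> Q\<close> by (simp add: diff_divide_distrib)
    qed (use 2 \<open>P \<le> P'\<close> \<open>Q' \<le> Q\<close> assms(1) in \<open>auto simp: divide_nonpos_nonneg\<close>)
    moreover have "max P Q = Q" "max P' Q' = Q'" using 2 \<open>P \<le> P'\<close> \<open>Q' \<le> Q\<close> by auto
    ultimately show ?thesis by simp
  next
    case 3
    then have "(P - Q) / max P Q \<le> 0" "0 \<le> (P' - Q') / max P' Q'"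
      using assms(1,2) by (simp_all add: divide_nonpos_pos divide_nonneg_pos)
    then show ?thesis by linarith
  qed
qed

lemma divide_max_symmetrized_le:
  fixes P Q P' Q' :: real
  assumes "0 \<le> Q" "0 \<le> Q'" "P' + Q' = P + Q" "0 \<le> (P - Q) + (P' - Q')"
  shows "Q / max P Q + Q' / max P' Q' \<le> P / max P Q + P' / max P' Q'"
proof -
  have "(Q - P) / max Q P \<le> (P' - Q') / max P' Q'"
    using assms by (intro diff_divide_max_mono) auto
  then show ?thesis by (simp add: max.commute diff_divide_distrib)
qed

lemma integral_mono_AE_measure_preserving:
  fixes f g :: "'a \<Rightarrow> real"
  assumes T: "T \<in> measurable M M" "distr M M T = M"
    and "integrable M f" "integrable M g"
    and "AE x in M. f x + f (T x) \<le> g x + g (T x)"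
  shows "integral\<^sup>L M f \<le> integral\<^sup>L M g"
proof -
  have *: "integrable M (\<lambda>x. h (T x)) \<and> (\<integral>x. h (T x) \<partial>M) = integral\<^sup>L M h"
    if "integrable M h" for h :: "'a \<Rightarrow> real"
    using that integrable_distr_eq[OF T(1), of h] integral_distr[OF T(1), of h] T(2) by auto
  have "(\<integral>x. f x + f (T x) \<partial>M) \<le> (\<integral>x. g x + g (T x) \<partial>M)"
    using assms *[of f] *[of g] by (intro integral_mono_AE) auto
  then show ?thesis
    using assms *[of f] *[of g] by simp
qed

definition permute_voters :: "nat \<Rightarrow> nat \<Rightarrow> (nat \<Rightarrow> nat) \<Rightarrow> (nat \<times> nat \<Rightarrow> real) \<Rightarrow> nat \<times> nat \<Rightarrow> real" where
  "permute_voters n m \<rho> X = (\<lambda>p\<in>{1..n} \<times> {1..m}. X (\<rho> (fst p), snd p))"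

lemma sw_2_permute_voters:
  assumes \<sigma>: "is_profile n 2 \<sigma>" "w \<in> {1, 2}" "j \<in> {1, 2}" "w \<noteq> j"
    and \<rho>: "bij_betw \<rho> {1..n} {1..n}" "\<And>i. i \<in> {1..n} \<Longrightarrow> \<sigma> i w \<noteq> 1 \<Longrightarrow> \<sigma> (\<rho> i) w = 1"
  shows "sw n 2 \<sigma> (permute_voters n 2 \<rho> X) w + sw n 2 \<sigma> (permute_voters n 2 \<rho> X) j
      = sw n 2 \<sigma> X w + sw n 2 \<sigma> X j" (is "?Yw + ?Yj = _")
    and "0 \<le> (sw n 2 \<sigma> X w - sw n 2 \<sigma> X j)
      + (sw n 2 \<sigma> (permute_voters n 2 \<rho> X) w - sw n 2 \<sigma> (permute_voters n 2 \<rho> X) j)"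
proof -
  have Y: "permute_voters n 2 \<rho> X (i, k) = X (\<rho> i, k)" if "i \<in> {1..n}" "k \<in> {1, 2}" for i k
    using that unfolding permute_voters_def by auto
  define s where "s i = (if \<sigma> i w = 1 then 1 else -1 :: real)" for i
  define d where "d i = \<bar>X (i, 1) - X (i, 2)\<bar>" for i
  have "?Yw + ?Yj = (\<Sum>i\<in>{1..n}. X (\<rho> i, 1) + X (\<rho> i, 2))"
    unfolding sw_2_sum_diff(1)[OF \<sigma>] by (intro sum.cong) (simp_all add: Y)
  also have "\<dots> = sw n 2 \<sigma> X w + sw n 2 \<sigma> X j"
    unfolding sw_2_sum_diff(1)[OF \<sigma>] by (rule sum.reindex_bij_betw[OF \<rho>(1)])
  finally show "?Yw + ?Yj = sw n 2 \<sigma> X w + sw n 2 \<sigma> X j" .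
  have "?Yw - ?Yj = (\<Sum>i\<in>{1..n}. s i * d (\<rho> i))"
    unfolding sw_2_sum_diff(2)[OF \<sigma>] s_def d_def by (intro sum.cong) (simp_all add: Y)
  moreover have "sw n 2 \<sigma> X w - sw n 2 \<sigma> X j = (\<Sum>i\<in>{1..n}. s i * d i)"
    unfolding sw_2_sum_diff(2)[OF \<sigma>] s_def d_def ..
  moreover have "0 \<le> (\<Sum>i\<in>{1..n}. s i * d i) + (\<Sum>i\<in>{1..n}. s i * d (\<rho> i))"
    using \<rho>(2) by (intro sum_signed_add_permuted_nonneg[OF \<rho>(1)]) (simp_all add: s_def d_def)
  ultimately show "0 \<le> (sw n 2 \<sigma> X w - sw n 2 \<sigma> X j) + (?Yw - ?Yj)"
    by linarith
qed

lemma
  assumes "prob_space D" "bij_betw \<rho> {1..n} {1..n}"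
  shows measurable_permute_voters:
      "permute_voters n m \<rho> \<in> measurable (sample_space D n m) (sample_space D n m)"
    and distr_permute_voters:
      "distr (sample_space D n m) (sample_space D n m) (permute_voters n m \<rho>) = sample_space D n m"
proof -
  let ?I = "{1..n} \<times> {1..m}"
  let ?f = "\<lambda>p. (\<rho> (fst p), snd p)"
  have f_inj: "inj_on ?f ?I"
  proof (rule inj_onI)
    fix p q assume "p \<in> ?I" "q \<in> ?I" "?f p = ?f q"
    then show "p = q"
      using inj_onD[OF bij_betw_imp_inj_on[OF assms(2)]] by (simp add: prod_eq_iff mem_Times_iff)
  qed
  have f_Pi: "?f \<in> ?I \<rightarrow> ?I"
    using bij_betwE[OF assms(2)] by (simp add: Pi_iff mem_Times_iff)
  show "permute_voters n m \<rho> \<in> measurable (sample_space D n m) (sample_space D n m)"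
    unfolding sample_space_def permute_voters_def
  proof (intro measurable_restrict measurable_component_singleton)
    fix p assume "p \<in> ?I"
    then show "?f p \<in> ?I" using f_Pi by blast
  qed
  have "distr (PiM ?I (\<lambda>_. D)) (PiM ?I (\<lambda>_. D)) (\<lambda>X. \<lambda>p\<in>?I. X (?f p)) = PiM ?I (\<lambda>_. D)"
    by (rule distr_PiM_reindex[of ?I "\<lambda>_. D" ?f ?I]) (use f_inj f_Pi assms(1) in auto)
  then show "distr (sample_space D n m) (sample_space D n m) (permute_voters n m \<rho>) = sample_space D n m"
    unfolding sample_space_def permute_voters_def .
qed

lemma AE_permute_voters:
  assumes "prob_space D" "bij_betw \<rho> {1..n} {1..n}" "AE X in sample_space D n m. P X"
  shows "AE X in sample_space D n m. P (permute_voters n m \<rho> X)"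
proof -
  have "AE X in distr (sample_space D n m) (sample_space D n m) (permute_voters n m \<rho>). P X"
    using assms(3) by (simp only: distr_permute_voters[OF assms(1,2)])
  then show ?thesis by (rule AE_distrD[OF measurable_permute_voters[OF assms(1,2)]])
qed

lemma AE_sample_space_unit:
  assumes "prob_space D" "AE x in D. 0 \<le> x \<and> x \<le> 1"
  shows "AE X in sample_space D n m. \<forall>i\<in>{1..n}. \<forall>k\<in>{1..m}. 0 \<le> X (i, k) \<and> X (i, k) \<le> 1"
proof -
  have "AE X in sample_space D n m. \<forall>p\<in>{1..n} \<times> {1..m}. 0 \<le> X p \<and> X p \<le> 1"
    unfolding sample_space_def using assms
    by (intro eventually_ball_finite ballI AE_PiM_component[where P="\<lambda>x. 0 \<le> x \<and> x \<le> 1"]) auto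
  then show ?thesis by (rule eventually_mono) auto
qed

lemma MAX_atLeastAtMost_1_2:
  fixes g :: "nat \<Rightarrow> 'a::linorder"
  shows "(MAX k\<in>{1..2}. g k) = max (g 1) (g 2)"
proof -
  have "{1..2::nat} = {1, 2}" by auto
  then show ?thesis by simp
qed

lemma measurable_sw_2:
  assumes "sets D = sets borel" "is_profile n 2 \<sigma>" "j \<in> {1, 2}"
  shows "(\<lambda>X. sw n 2 \<sigma> X j) \<in> borel_measurable (sample_space D n 2)"
proof -
  have "(\<lambda>X. X (i, k)) \<in> borel_measurable (sample_space D n 2)" if "i \<in> {1..n}" "k \<in> {1, 2}" for i k
  proof -
    have "(\<lambda>X. X (i, k)) \<in> measurable (sample_space D n 2) D"
      unfolding sample_space_def using that by (intro measurable_component_singleton) auto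
    then show ?thesis using measurable_cong_sets[OF refl assms(1)] by blast
  qed
  then show ?thesis
    unfolding sw_2[OF assms(2,3)] by (auto intro!: borel_measurable_sum)
qed

lemma
  assumes D: "prob_space D" "sets D = sets borel" "AE x in D. 0 \<le> x \<and> x \<le> 1"
    and \<sigma>: "is_profile n 2 \<sigma>" "j \<in> {1, 2}"
  shows integrable_sw_2: "integrable (sample_space D n 2) (\<lambda>X. sw n 2 \<sigma> X j)"
    and integrable_dist_2:
      "integrable (sample_space D n 2) (\<lambda>X. sw n 2 \<sigma> X j / (MAX k\<in>{1..2}. sw n 2 \<sigma> X k))"
proof -
  interpret prob_space "sample_space D n 2"
    unfolding sample_space_def using D(1) by (rule prob_space_PiM)
  have m: "(\<lambda>X. sw n 2 \<sigma> X k) \<in> borel_measurable (sample_space D n 2)" if "k \<in> {1, 2}" for k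
    using measurable_sw_2[OF D(2) \<sigma>(1) that] .
  have bounds: "AE X in sample_space D n 2. \<forall>k\<in>{1, 2}. 0 \<le> sw n 2 \<sigma> X k \<and> sw n 2 \<sigma> X k \<le> n"
    using AE_sample_space_unit[OF D(1,3)]
  proof (rule eventually_mono, intro ballI conjI)
    fix X :: "nat \<times> nat \<Rightarrow> real" and k :: nat
    assume "\<forall>i\<in>{1..n}. \<forall>k\<in>{1..2}. 0 \<le> X (i, k) \<and> X (i, k) \<le> 1" "k \<in> {1, 2::nat}"
    then show "0 \<le> sw n 2 \<sigma> X k" "sw n 2 \<sigma> X k \<le> n"
      using sw_bounds[OF \<sigma>(1), of k X] by auto
  qed
  show "integrable (sample_space D n 2) (\<lambda>X. sw n 2 \<sigma> X j)"
    using bounds \<sigma>(2) by (intro integrable_const_bound[where B = n] m) auto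
  have "AE X in sample_space D n 2. norm (sw n 2 \<sigma> X j / max (sw n 2 \<sigma> X 1) (sw n 2 \<sigma> X 2)) \<le> 1"
    using bounds by (rule eventually_mono) (use \<sigma>(2) in \<open>auto simp: divide_le_eq_1 max_def\<close>)
  moreover have "(\<lambda>X. sw n 2 \<sigma> X j / max (sw n 2 \<sigma> X 1) (sw n 2 \<sigma> X 2))
      \<in> borel_measurable (sample_space D n 2)"
    using m \<sigma>(2) by (intro borel_measurable_divide borel_measurable_max) auto
  ultimately show "integrable (sample_space D n 2) (\<lambda>X. sw n 2 \<sigma> X j / (MAX k\<in>{1..2}. sw n 2 \<sigma> X k))"
    unfolding MAX_atLeastAtMost_1_2 by (intro integrable_const_bound[where B = 1])
qed

lemma majority_winner_dominates:
  assumes D: "prob_space D" "sets D = sets borel" "AE x in D. 0 \<le> x \<and> x \<le> 1"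
    and \<sigma>: "is_profile n 2 \<sigma>" "w \<in> {1, 2}" "j \<in> {1, 2}" "w \<noteq> j"
    and majority: "card {i\<in>{1..n}. \<sigma> i j = 1} \<le> card {i\<in>{1..n}. \<sigma> i w = 1}"
  shows "exp_sw D n 2 \<sigma> j \<le> exp_sw D n 2 \<sigma> w \<and> exp_dist D n 2 \<sigma> j \<le> exp_dist D n 2 \<sigma> w"
proof -
  let ?S = "sample_space D n 2"
  let ?A = "{i\<in>{1..n}. \<sigma> i w = 1}"
  have "finite {1..n}" "?A \<subseteq> {1..n}" by (simp, rule Collect_subset)
  moreover have "{1..n} - ?A = {i\<in>{1..n}. \<sigma> i j = 1}"
    using profile_2_top_iff[OF \<sigma>(1) _ \<sigma>(2-4)] by blast
  then have "card ({1..n} - ?A) \<le> card ?A"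
    using majority by simp
  ultimately obtain \<rho> where \<rho>: "bij_betw \<rho> {1..n} {1..n}" "\<rho> ` ({1..n} - ?A) \<subseteq> ?A"
    by (rule ex_bij_betw_into)
  let ?T = "permute_voters n 2 \<rho>"
  note T = measurable_permute_voters[OF D(1) \<rho>(1), where m = 2]
    distr_permute_voters[OF D(1) \<rho>(1), where m = 2]
  have swap: "sw n 2 \<sigma> (?T X) w + sw n 2 \<sigma> (?T X) j = sw n 2 \<sigma> X w + sw n 2 \<sigma> X j"
    "0 \<le> (sw n 2 \<sigma> X w - sw n 2 \<sigma> X j) + (sw n 2 \<sigma> (?T X) w - sw n 2 \<sigma> (?T X) j)" for X
    using sw_2_permute_voters[OF \<sigma> \<rho>(1)] \<rho>(2) by blast+
  have "sw n 2 \<sigma> X j + sw n 2 \<sigma> (?T X) j \<le> sw n 2 \<sigma> X w + sw n 2 \<sigma> (?T X) w" for X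
    using swap(2)[of X] by linarith
  then have "exp_sw D n 2 \<sigma> j \<le> exp_sw D n 2 \<sigma> w"
    unfolding exp_sw_def
    by (intro integral_mono_AE_measure_preserving[OF T] integrable_sw_2 D \<sigma> AE_I2)
  moreover have "exp_dist D n 2 \<sigma> j \<le> exp_dist D n 2 \<sigma> w"
    unfolding exp_dist_def
  proof (rule integral_mono_AE_measure_preserving[OF T integrable_dist_2[OF D \<sigma>(1,3)] integrable_dist_2[OF D \<sigma>(1,2)]])
    have unit: "AE X in ?S. \<forall>i\<in>{1..n}. \<forall>k\<in>{1..2}. 0 \<le> X (i, k) \<and> X (i, k) \<le> 1"
      using AE_sample_space_unit[OF D(1,3)] .
    then have unit_T: "AE X in ?S. \<forall>i\<in>{1..n}. \<forall>k\<in>{1..2}. 0 \<le> ?T X (i, k) \<and> ?T X (i, k) \<le> 1"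
      by (rule AE_permute_voters[OF D(1) \<rho>(1)])
    have max_wj: "max (sw n 2 \<sigma> X 1) (sw n 2 \<sigma> X 2) = max (sw n 2 \<sigma> X w) (sw n 2 \<sigma> X j)" for X
      using \<sigma>(2-4) by (auto simp: max.commute)
    show "AE X in ?S.
        sw n 2 \<sigma> X j / (MAX k\<in>{1..2}. sw n 2 \<sigma> X k) + sw n 2 \<sigma> (?T X) j / (MAX k\<in>{1..2}. sw n 2 \<sigma> (?T X) k)
      \<le> sw n 2 \<sigma> X w / (MAX k\<in>{1..2}. sw n 2 \<sigma> X k) + sw n 2 \<sigma> (?T X) w / (MAX k\<in>{1..2}. sw n 2 \<sigma> (?T X) k)"
      using unit unit_T unfolding MAX_atLeastAtMost_1_2 max_wj
    proof eventually_elim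
      case (elim X)
      have "j \<in> {1..2}" using \<sigma>(3) by auto
      then show ?case
        using sw_bounds[OF \<sigma>(1) _ elim(1)] sw_bounds[OF \<sigma>(1) _ elim(2)] swap[of X]
        by (intro divide_max_symmetrized_le) auto
    qed
  qed
  ultimately show ?thesis ..
qed

theorem theorem1:
  fixes D :: "real measure" and n :: nat and f :: "(nat \<Rightarrow> nat \<Rightarrow> nat) \<Rightarrow> nat"
  assumes "n \<ge> 1"
    and "prob_space D" and "sets D = sets borel"
    and "AE x in D. 0 \<le> x \<and> x \<le> 1"
    and "is_majority_rule n f"
  shows "exp_distortion_maximizing D n 2 f \<and> exp_welfare_maximizing D n 2 f"
proof -
  have "f \<sigma> \<in> {1..2} \<and> (\<forall>j\<in>{1..2}. exp_dist D n 2 \<sigma> j \<le> exp_dist D n 2 \<sigma> (f \<sigma>)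
      \<and> exp_sw D n 2 \<sigma> j \<le> exp_sw D n 2 \<sigma> (f \<sigma>))" if \<sigma>: "is_profile n 2 \<sigma>" for \<sigma>
  proof -
    have winner: "f \<sigma> \<in> {1, 2}"
      and majority: "\<forall>j\<in>{1, 2}. card {i\<in>{1..n}. \<sigma> i j = 1} \<le> card {i\<in>{1..n}. \<sigma> i (f \<sigma>) = 1}"
      using assms(5) \<sigma> unfolding is_majority_rule_def by auto
    have "exp_dist D n 2 \<sigma> j \<le> exp_dist D n 2 \<sigma> (f \<sigma>) \<and> exp_sw D n 2 \<sigma> j \<le> exp_sw D n 2 \<sigma> (f \<sigma>)"
      if "j \<in> {1..2}" for j
    proof -
      have j: "j \<in> {1, 2}" using that by auto
      show ?thesis
        using majority_winner_dominates[OF assms(2-4) \<sigma> winner j] majority j by (cases "j = f \<sigma>") auto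
    qed
    then show ?thesis using winner by auto
  qed
  then show ?thesis
    unfolding exp_distortion_maximizing_def exp_welfare_maximizing_def by blast
qed

end
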